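(* Let $(p_{ij})_{i,j\in\{0,1\}}$ be a transition matrix with all $p_{ij}\in(0,1)$ and $p_{ij}\ne\tfrac12$ for some $(i,j)$, and for $i\in\{0,1\}$, $n\in\mathbb N_0$ let $I_n^i$ be binomially $B(n,p_{i0})$ distributed. Let $(a_i(n))_{n\in\mathbb N_0}$, $(\varepsilon_i(n))_{n\in\mathbb N_0}$, $i\in\{0,1\}$, be real sequences satisfying $$a_i(n)=\mathbb E[a_0(I_n^i)]+\mathbb E[a_1(n-I_n^i)]+\varepsilon_i(n),\qquad i\in\{0,1\},\ n\in\mathbb N.$$ If $\varepsilon_i(n)=c_in+O(n^\alpha)$ for constants $c_0,c_1\in\mathbb R$, some $\alpha<1$ and both $i$, then as $n\to\infty$ $$a_i(n)=\frac{\pi_0c_0+\pi_1c_1}{H}n\log n+O(n),\qquad i\in\{0,1\}.$$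
   Context: $\pi_0=p_{10}/(p_{01}+p_{10})$, $\pi_1=p_{01}/(p_{01}+p_{10})$, $H_i=-\sum_{j}p_{ij}\log p_{ij}$, $H=\pi_0H_0+\pi_1H_1$. *)

theory Defs
  imports "HOL-Probability.Probability" "HOL-Library.Landau_Symbols"
begin

definition stat_pi :: "(nat \<Rightarrow> nat \<Rightarrow> real) \<Rightarrow> nat \<Rightarrow> real" where
  "stat_pi p i = (if i = 0 then p 1 0 / (p 0 1 + p 1 0) else p 0 1 / (p 0 1 + p 1 0))"

definition row_entropy :: "(nat \<Rightarrow> nat \<Rightarrow> real) \<Rightarrow> nat \<Rightarrow> real" where
  "row_entropy p i = - (\<Sum>j\<in>{0,1}. p i j * ln (p i j))"

definition chain_entropy :: "(nat \<Rightarrow> nat \<Rightarrow> real) \<Rightarrow> real" where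
  "chain_entropy p = stat_pi p 0 * row_entropy p 0 + stat_pi p 1 * row_entropy p 1"

end

theory Submission
  imports Defs
begin

text \<open>Let \<open>K = (\<pi>\<^sub>0 c\<^sub>0 + \<pi>\<^sub>1 c\<^sub>1) / H\<close>. By Jensen's inequality and a second-moment bound,
  \<open>n log n\<close> solves the recurrence up to a toll \<open>n H\<^sub>i + O(1)\<close> in state \<open>i\<close>. The residual
  tolls \<open>c\<^sub>i - K H\<^sub>i\<close> have stationary mean zero, so the Poisson equation of the chain yields
  constants \<open>g\<^sub>i\<close> for which \<open>f\<^sub>i(n) = a\<^sub>i(n) - K n log n - g\<^sub>i n\<close> has toll \<open>O(n\<^sup>\<beta>)\<close> with
  \<open>\<beta> < 1\<close>. Strict concavity gives \<open>\<bbbE>[I\<^sup>\<beta> + (n - I)\<^sup>\<beta>] \<ge> n\<^sup>\<beta> (1 + (1 - \<beta>) q (1 - q))\<close>, which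
  makes \<open>C n - D n\<^sup>\<beta> + E\<close> a supersolution for large \<open>D\<close>; a comparison argument then bounds
  \<open>|f\<^sub>i(n)|\<close> linearly.\<close>

definition binom_weight :: "nat \<Rightarrow> real \<Rightarrow> nat \<Rightarrow> real" where
  "binom_weight n q k = real (n choose k) * q ^ k * (1 - q) ^ (n - k)"

lemma expectation_binomial_pmf_eq_sum:
  "0 \<le> q \<Longrightarrow> q \<le> 1 \<Longrightarrow>
    measure_pmf.expectation (binomial_pmf n q) h = (\<Sum>k\<le>n. binom_weight n q k * h k)"
  by (simp add: expectation_binomial_pmf' binom_weight_def)

lemma binom_weight_nonneg: "0 \<le> q \<Longrightarrow> q \<le> 1 \<Longrightarrow> 0 \<le> binom_weight n q k"
  by (simp add: binom_weight_def)

lemma sum_binom_weight: "(\<Sum>k\<le>n. binom_weight n q k) = 1"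
  using binomial_ring[of q "1 - q" n] by (simp add: binom_weight_def)

lemma sum_binom_weight_mult_of_nat_Suc:
  "(\<Sum>k\<le>Suc m. binom_weight (Suc m) q k * (real k * h k))
    = real (Suc m) * q * (\<Sum>k\<le>m. binom_weight m q k * h (Suc k))"
proof -
  have shift: "binom_weight (Suc m) q (Suc k) * (real (Suc k) * h (Suc k))
      = real (Suc m) * q * (binom_weight m q k * h (Suc k))" for k
  proof -
    have "real (Suc m choose Suc k) * real (Suc k) = real (Suc m) * real (m choose k)"
      by (metis Suc_times_binomial_eq of_nat_mult)
    then show ?thesis
      by (simp add: binom_weight_def mult_ac)
  qed
  have "(\<Sum>k\<le>Suc m. binom_weight (Suc m) q k * (real k * h k))
      = (\<Sum>k\<le>m. binom_weight (Suc m) q (Suc k) * (real (Suc k) * h (Suc k)))"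
    by (subst sum.atMost_Suc_shift) simp
  also have "\<dots> = real (Suc m) * q * (\<Sum>k\<le>m. binom_weight m q k * h (Suc k))"
    unfolding shift sum_distrib_left ..
  finally show ?thesis .
qed

lemma sum_binom_weight_mult_of_nat: "(\<Sum>k\<le>n. binom_weight n q k * real k) = real n * q"
proof (cases n)
  case (Suc m)
  then show ?thesis
    using sum_binom_weight_mult_of_nat_Suc[of m q "\<lambda>_. 1"] sum_binom_weight[of m q] by simp
qed simp

lemma sum_binom_weight_mult_of_nat_squared:
  "(\<Sum>k\<le>n. binom_weight n q k * real k ^ 2) = real n * q * ((real n - 1) * q + 1)"
proof (cases n)
  case (Suc m)
  have "(\<Sum>k\<le>m. binom_weight m q k * real (Suc k))
      = (\<Sum>k\<le>m. binom_weight m q k * real k) + (\<Sum>k\<le>m. binom_weight m q k)"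
    by (simp add: algebra_simps sum.distrib)
  then show ?thesis
    using Suc sum_binom_weight_mult_of_nat_Suc[of m q real] sum_binom_weight[of m q]
      sum_binom_weight_mult_of_nat[of m q]
    by (simp add: power2_eq_square)
qed simp

lemma sum_binom_weight_quadratic:
  "(\<Sum>k\<le>n. binom_weight n q k * (A + B * real k + C * real k ^ 2))
    = A + B * (real n * q) + C * (real n * q * ((real n - 1) * q + 1))"
proof -
  have "(\<Sum>k\<le>n. binom_weight n q k * (A + B * real k + C * real k ^ 2))
      = A * (\<Sum>k\<le>n. binom_weight n q k) + B * (\<Sum>k\<le>n. binom_weight n q k * real k)
        + C * (\<Sum>k\<le>n. binom_weight n q k * real k ^ 2)"
    by (simp add: algebra_simps sum.distrib sum_distrib_left)
  then show ?thesis
    by (simp add: sum_binom_weight sum_binom_weight_mult_of_nat sum_binom_weight_mult_of_nat_squared)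
qed

lemma sum_binom_weight_reflect:
  "(\<Sum>k\<le>n. binom_weight n q k * h (n - k)) = (\<Sum>k\<le>n. binom_weight n (1 - q) k * h k)"
proof -
  have "(\<Sum>k\<le>n. binom_weight n q k * h (n - k)) = (\<Sum>k\<le>n. binom_weight n q (n - k) * h k)"
    by (rule sum.reindex_bij_witness[where i = "\<lambda>k. n - k" and j = "\<lambda>k. n - k"]) auto
  also have "\<dots> = (\<Sum>k\<le>n. binom_weight n (1 - q) k * h k)"
    by (intro sum.cong) (auto simp: binom_weight_def binomial_symmetric[symmetric] mult_ac)
  finally show ?thesis .
qed

lemma sum_binom_weight_mono:
  "0 \<le> q \<Longrightarrow> q \<le> 1 \<Longrightarrow> (\<And>k. k \<le> n \<Longrightarrow> f k \<le> g k) \<Longrightarrow>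
    (\<Sum>k\<le>n. binom_weight n q k * f k) \<le> (\<Sum>k\<le>n. binom_weight n q k * g k)"
  by (intro sum_mono mult_left_mono) (auto simp: binom_weight_nonneg)

lemma binom_weight_endpoints_less_one:
  assumes "0 < q" "q < 1" "n \<ge> 2"
  shows "binom_weight n q 0 + binom_weight n q n < 1"
proof -
  have "q ^ n < q ^ 1" "(1 - q) ^ n < (1 - q) ^ 1"
    using assms by (intro power_strict_decreasing; simp)+
  then show ?thesis by (simp add: binom_weight_def)
qed

definition binary_entropy :: "real \<Rightarrow> real" where
  "binary_entropy q = - (q * ln q + (1 - q) * ln (1 - q))"

lemma binary_entropy_pos:
  assumes "0 < q" "q < 1"
  shows "0 < binary_entropy q"
proof -
  have "q * ln q < 0" "(1 - q) * ln (1 - q) < 0"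
    using assms by (simp_all add: mult_pos_neg)
  then show ?thesis by (simp add: binary_entropy_def)
qed

lemma mult_ln_ge_tangent:
  fixes x m :: real
  assumes "0 \<le> x" "0 < m"
  shows "x * ln m + x - m \<le> x * ln x"
proof (cases "x = 0")
  case False
  with assms have x: "0 < x" by simp
  have "ln (m / x) \<le> m / x - 1"
    using x assms by (intro ln_le_minus_one) simp
  then have "x * (ln m - ln x) \<le> x * (m / x - 1)"
    using x assms by (intro mult_left_mono) (simp_all add: ln_div)
  then show ?thesis
    using x by (simp add: algebra_simps)
qed (use assms in simp)

lemma mult_ln_le_quadratic:
  fixes x m :: real
  assumes "0 \<le> x" "0 < m"
  shows "x * ln x \<le> x * ln m - x + x\<^sup>2 / m"
proof (cases "x = 0")
  case False
  with assms have x: "0 < x" by simp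
  have "ln (x / m) \<le> x / m - 1"
    using x assms by (intro ln_le_minus_one) simp
  then have "x * (ln x - ln m) \<le> x * (x / m - 1)"
    using x assms by (intro mult_left_mono) (simp_all add: ln_div)
  then show ?thesis
    using x by (simp add: algebra_simps power2_eq_square)
qed (use assms in simp)

text \<open>The lower bound is Jensen's inequality; the upper one is where the variance
  \<open>n q (1 - q)\<close> enters.\<close>

lemma sum_binom_weight_mult_ln_bounds:
  assumes q: "0 < q" "q < 1" and n: "n \<ge> 1"
  defines "m \<equiv> real n * q"
  shows "m * ln m \<le> (\<Sum>k\<le>n. binom_weight n q k * (real k * ln (real k)))"
    and "(\<Sum>k\<le>n. binom_weight n q k * (real k * ln (real k))) \<le> m * ln m + (1 - q)"
proof -
  have m: "0 < m" using q n by (simp add: m_def)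
  have "(\<Sum>k\<le>n. binom_weight n q k * (- m + (ln m + 1) * real k + 0 * real k ^ 2))
      \<le> (\<Sum>k\<le>n. binom_weight n q k * (real k * ln (real k)))"
    using q m mult_ln_ge_tangent[of _ m]
    by (intro sum_binom_weight_mono) (simp_all add: algebra_simps)
  then show "m * ln m \<le> (\<Sum>k\<le>n. binom_weight n q k * (real k * ln (real k)))"
    unfolding sum_binom_weight_quadratic by (simp add: m_def algebra_simps)
  have "(\<Sum>k\<le>n. binom_weight n q k * (real k * ln (real k)))
      \<le> (\<Sum>k\<le>n. binom_weight n q k * (0 + (ln m - 1) * real k + (1 / m) * real k ^ 2))"
    using q m mult_ln_le_quadratic[of _ m]
    by (intro sum_binom_weight_mono) (simp_all add: algebra_simps)
  also have "\<dots> = m * ln m + (1 - q)"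
    unfolding sum_binom_weight_quadratic using m q n by (simp add: m_def field_simps)
  finally show "(\<Sum>k\<le>n. binom_weight n q k * (real k * ln (real k))) \<le> m * ln m + (1 - q)" .
qed

lemma powr_ge_quadratic:
  fixes t \<beta> :: real
  assumes t: "0 \<le> t" "t \<le> 1" and \<beta>: "0 < \<beta>" "\<beta> < 1"
  shows "t + (1 - \<beta>) * t * (1 - t) \<le> t powr \<beta>"
proof (cases "t = 0")
  case False
  with t have t0: "0 < t" by simp
  have den: "0 < (1 - \<beta>) * t + \<beta>"
    using \<beta> t0 by (simp add: add_nonneg_pos)
  have "t powr (1 - \<beta>) * 1 powr \<beta> \<le> (1 - \<beta>) * t + \<beta> * 1"
    using \<beta> t0 by (intro Youngs_inequality_0) auto
  then have "t / ((1 - \<beta>) * t + \<beta>) \<le> t / t powr (1 - \<beta>)"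
    using t0 den by (intro divide_left_mono) auto
  also have "\<dots> = t powr \<beta>"
    using t0 by (simp add: powr_diff)
  finally have young: "t / ((1 - \<beta>) * t + \<beta>) \<le> t powr \<beta>" .
  have "(t + (1 - \<beta>) * t * (1 - t)) * ((1 - \<beta>) * t + \<beta>) = t * (1 - ((1 - \<beta>) * (1 - t))\<^sup>2)"
    by (simp add: algebra_simps power2_eq_square)
  also have "\<dots> \<le> t"
    using t0 by (simp add: mult_left_le)
  finally have "t + (1 - \<beta>) * t * (1 - t) \<le> t / ((1 - \<beta>) * t + \<beta>)"
    using den by (simp add: le_divide_eq)
  with young show ?thesis by linarith
qed simp

lemma powr_add_powr_diff_ge:
  fixes \<beta> :: real
  assumes \<beta>: "0 < \<beta>" "\<beta> < 1" and k: "k \<le> n" and n: "n \<ge> 1"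
  defines "N \<equiv> real n"
  shows "N powr \<beta> * (1 + 2 * (1 - \<beta>) * (real k / N) - 2 * (1 - \<beta>) * (real k ^ 2 / N\<^sup>2))
    \<le> real k powr \<beta> + real (n - k) powr \<beta>"
proof -
  define t where "t = real k / N"
  have N: "N \<ge> 1" using n by (simp add: N_def)
  have t: "0 \<le> t" "t \<le> 1" using k N by (auto simp: t_def N_def field_simps)
  have "real k powr \<beta> = N powr \<beta> * t powr \<beta>"
    using N by (simp add: t_def powr_divide)
  moreover have "real (n - k) = N * (1 - t)"
    using k N by (simp add: t_def N_def of_nat_diff field_simps)
  then have "real (n - k) powr \<beta> = N powr \<beta> * (1 - t) powr \<beta>"
    using N t by (simp add: powr_mult)
  moreover have "1 + 2 * (1 - \<beta>) * t * (1 - t) \<le> t powr \<beta> + (1 - t) powr \<beta>"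
    using powr_ge_quadratic[OF t \<beta>] powr_ge_quadratic[of "1 - t", OF _ _ \<beta>] t
    by (simp add: algebra_simps)
  ultimately have "N powr \<beta> * (1 + 2 * (1 - \<beta>) * t * (1 - t)) \<le> real k powr \<beta> + real (n - k) powr \<beta>"
    by (simp add: mult_left_mono flip: distrib_left)
  moreover have "1 + 2 * (1 - \<beta>) * t * (1 - t) = 1 + 2 * (1 - \<beta>) * (real k / N) - 2 * (1 - \<beta>) * (real k ^ 2 / N\<^sup>2)"
    using N by (simp add: t_def field_simps power2_eq_square)
  ultimately show ?thesis by (simp only:)
qed

lemma sum_binom_weight_powr_ge:
  fixes q \<beta> :: real
  assumes q: "0 < q" "q < 1" and \<beta>: "0 < \<beta>" "\<beta> < 1" and n: "n \<ge> 2"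
  shows "real n powr \<beta> * (1 + (1 - \<beta>) * (q * (1 - q)))
    \<le> (\<Sum>k\<le>n. binom_weight n q k * (real k powr \<beta> + real (n - k) powr \<beta>))"
proof -
  define N where "N = real n"
  define P where "P = N powr \<beta>"
  have N: "N \<ge> 2" using n by (simp add: N_def)
  have "1 \<le> 2 * (N - 1) / N"
    using N by (simp add: field_simps)
  moreover have "0 \<le> (1 - \<beta>) * (q * (1 - q))"
    using q \<beta> by simp
  ultimately have "P * (1 + (1 - \<beta>) * (q * (1 - q)))
      \<le> P * (1 + (1 - \<beta>) * (q * (1 - q)) * (2 * (N - 1) / N))"
    by (intro mult_left_mono add_left_mono mult_le_cancel_left1[THEN iffD2]) (auto simp: P_def)
  also have "\<dots> = (\<Sum>k\<le>n. binom_weight n q k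
      * (P + (2 * P * (1 - \<beta>) / N) * real k + (- 2 * P * (1 - \<beta>) / N\<^sup>2) * real k ^ 2))"
    unfolding sum_binom_weight_quadratic using N by (simp add: N_def field_simps power2_eq_square)
  also have "\<dots> \<le> (\<Sum>k\<le>n. binom_weight n q k * (real k powr \<beta> + real (n - k) powr \<beta>))"
    using q n powr_add_powr_diff_ge[OF \<beta>, of _ n]
    by (intro sum_binom_weight_mono) (simp_all add: P_def N_def field_simps power2_eq_square)
  finally show ?thesis by (simp add: P_def N_def)
qed

definition split_toll :: "(nat \<Rightarrow> real) \<Rightarrow> (nat \<Rightarrow> nat \<Rightarrow> real) \<Rightarrow> nat \<Rightarrow> nat \<Rightarrow> real" where
  "split_toll q f i n = f i n - (\<Sum>k\<le>n. binom_weight n (q i) k * (f 0 k + f 1 (n - k)))"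

lemma split_toll_diff_scaled:
  "split_toll q (\<lambda>i n. f i n - K * u i n - v i n) i n
    = split_toll q f i n - K * split_toll q u i n - split_toll q v i n"
  by (simp add: split_toll_def algebra_simps sum_subtractf sum.distrib sum_distrib_left)

lemma split_toll_linear:
  "split_toll q (\<lambda>i n. g i * real n) i n = real n * (g i - g 0 * q i - g 1 * (1 - q i))"
proof -
  have "(\<Sum>k\<le>n. binom_weight n (q i) k * (g 0 * real k + g 1 * real (n - k)))
      = g 0 * (\<Sum>k\<le>n. binom_weight n (q i) k * real k)
        + g 1 * (\<Sum>k\<le>n. binom_weight n (q i) k * real (n - k))"
    by (simp add: distrib_left sum.distrib sum_distrib_left mult.left_commute del: of_nat_diff)
  also have "\<dots> = g 0 * (real n * q i) + g 1 * (real n * (1 - q i))"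
    using sum_binom_weight_reflect[of n "q i" real] sum_binom_weight_mult_of_nat[of n "1 - q i"]
    by (simp add: sum_binom_weight_mult_of_nat del: of_nat_diff)
  finally show ?thesis
    by (simp add: split_toll_def algebra_simps)
qed

lemma split_toll_mult_ln:
  assumes "0 < q i" "q i < 1" "n \<ge> 1"
  shows "\<bar>split_toll q (\<lambda>_ n. real n * ln (real n)) i n - real n * binary_entropy (q i)\<bar> \<le> 1"
proof -
  define Q where "Q = q i"
  have Q: "0 < Q" "Q < 1" "0 < 1 - Q" "1 - Q < 1" using assms by (simp_all add: Q_def)
  define S where "S r = (\<Sum>k\<le>n. binom_weight n r k * (real k * ln (real k)))" for r
  have "split_toll q (\<lambda>_ n. real n * ln (real n)) i n = real n * ln (real n) - S Q - S (1 - Q)"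
    by (simp add: split_toll_def S_def Q_def sum.distrib distrib_left
        sum_binom_weight_reflect[where h = "\<lambda>k. real k * ln (real k)"] del: of_nat_diff)
  moreover have "ln (real n * Q) = ln (real n) + ln Q" "ln (real n * (1 - Q)) = ln (real n) + ln (1 - Q)"
    using Q assms(3) by (simp_all add: ln_mult_pos)
  then have "real n * Q * ln (real n * Q) + real n * (1 - Q) * ln (real n * (1 - Q))
      = real n * ln (real n) - real n * binary_entropy Q"
    by (simp add: binary_entropy_def algebra_simps)
  moreover note sum_binom_weight_mult_ln_bounds[OF Q(1,2) assms(3), folded S_def]
    sum_binom_weight_mult_ln_bounds[OF Q(3,4) assms(3), folded S_def]
  ultimately show ?thesis
    by (simp add: Q_def abs_le_iff)
qed

lemma abs_le_split_toll_add_sum_abs: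
  assumes "0 \<le> q i" "q i \<le> 1"
  shows "\<bar>f i n\<bar> \<le> \<bar>split_toll q f i n\<bar>
    + (\<Sum>k\<le>n. binom_weight n (q i) k * (\<bar>f 0 k\<bar> + \<bar>f 1 (n - k)\<bar>))"
proof -
  let ?w = "binom_weight n (q i)"
  have "\<bar>\<Sum>k\<le>n. ?w k * (f 0 k + f 1 (n - k))\<bar> \<le> (\<Sum>k\<le>n. \<bar>?w k * (f 0 k + f 1 (n - k))\<bar>)"
    by (rule sum_abs)
  also have "\<dots> \<le> (\<Sum>k\<le>n. ?w k * (\<bar>f 0 k\<bar> + \<bar>f 1 (n - k)\<bar>))"
    using assms by (intro sum_mono) (simp add: abs_mult binom_weight_nonneg mult_left_mono)
  finally show ?thesis
    unfolding split_toll_def by linarith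
qed

lemma sum_le_sum_off_endpoints:
  fixes w h b :: "nat \<Rightarrow> real"
  assumes "n \<ge> 1" and "\<And>k. 0 \<le> w k" and "\<And>k. 0 < k \<Longrightarrow> k < n \<Longrightarrow> h k \<le> b k"
  shows "(\<Sum>k\<le>n. w k * h k) \<le> (\<Sum>k\<le>n. w k * b k) + w 0 * (h 0 - b 0) + w n * (h n - b n)"
proof -
  define b' where
    "b' k = b k + (if k = 0 then h 0 - b 0 else 0) + (if k = n then h n - b n else 0)" for k
  have "(\<Sum>k\<le>n. w k * h k) \<le> (\<Sum>k\<le>n. w k * b' k)"
    using assms by (intro sum_mono mult_left_mono) (auto simp: b'_def)
  also have "\<dots> = (\<Sum>k\<le>n. w k * b k) + w 0 * (h 0 - b 0) + w n * (h n - b n)"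
    by (simp add: b'_def distrib_left sum.distrib if_distrib[of "(*) (w _)"] cong: if_cong)
  finally show ?thesis .
qed

text \<open>The terms \<open>k = 0\<close> and \<open>k = n\<close> of the sum refer to \<open>f\<close> at \<open>n\<close> itself; they carry total
  weight \<open>< 1\<close>, which is why the larger of \<open>|f 0 n|\<close> and \<open>|f 1 n|\<close> can still be bounded.\<close>

lemma abs_le_supersolution_of_split_toll:
  fixes q B :: "nat \<Rightarrow> real" and f :: "nat \<Rightarrow> nat \<Rightarrow> real"
  assumes q: "\<And>i. i \<in> {0,1} \<Longrightarrow> 0 < q i \<and> q i < 1"
    and N: "N \<ge> 2"
    and init: "\<And>i n. i \<in> {0,1} \<Longrightarrow> n < N \<Longrightarrow> \<bar>f i n\<bar> \<le> B n"
    and super: "\<And>i n. i \<in> {0,1} \<Longrightarrow> n \<ge> N \<Longrightarrow>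
      \<bar>split_toll q f i n\<bar> + (\<Sum>k\<le>n. binom_weight n (q i) k * (B k + B (n - k))) \<le> B n"
  shows "\<forall>i\<in>{0,1}. \<bar>f i n\<bar> \<le> B n"
proof (induction n rule: less_induct)
  case (less n)
  show ?case
  proof (cases "n < N")
    case True
    then show ?thesis using init by blast
  next
    case False
    then have n: "n \<ge> N" "n \<ge> 2" using N by auto
    define X where "X = max \<bar>f 0 n\<bar> \<bar>f 1 n\<bar>"
    have step: "\<bar>f i n\<bar> \<le> B n + (binom_weight n (q i) 0 + binom_weight n (q i) n) * (X - B n)"
      if i: "i \<in> {0,1}" for i
    proof -
      let ?w = "binom_weight n (q i)"
      have q01: "0 \<le> q i" "q i \<le> 1" using q[OF i] by auto
      have interior: "\<bar>f 0 k\<bar> + \<bar>f 1 (n - k)\<bar> \<le> B k + B (n - k)" if "0 < k" "k < n" for k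
        using that less.IH[of k] less.IH[of "n - k"] by (intro add_mono) auto
      have triangle: "\<bar>f i n\<bar> \<le> \<bar>split_toll q f i n\<bar> + (\<Sum>k\<le>n. ?w k * (\<bar>f 0 k\<bar> + \<bar>f 1 (n - k)\<bar>))"
        using q01 by (rule abs_le_split_toll_add_sum_abs)
      have endpoints: "(\<Sum>k\<le>n. ?w k * (\<bar>f 0 k\<bar> + \<bar>f 1 (n - k)\<bar>)) \<le> (\<Sum>k\<le>n. ?w k * (B k + B (n - k)))
          + ?w 0 * (\<bar>f 0 0\<bar> + \<bar>f 1 n\<bar> - (B 0 + B n)) + ?w n * (\<bar>f 0 n\<bar> + \<bar>f 1 0\<bar> - (B n + B 0))"
        using sum_le_sum_off_endpoints[of n ?w "\<lambda>k. \<bar>f 0 k\<bar> + \<bar>f 1 (n - k)\<bar>"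
            "\<lambda>k. B k + B (n - k)", OF _ _ interior] n q01 binom_weight_nonneg by simp
      have corners: "?w 0 * (\<bar>f 0 0\<bar> + \<bar>f 1 n\<bar> - (B 0 + B n)) + ?w n * (\<bar>f 0 n\<bar> + \<bar>f 1 0\<bar> - (B n + B 0))
          \<le> (?w 0 + ?w n) * (X - B n)"
        using less.IH[of 0] n q01 binom_weight_nonneg
        unfolding distrib_right by (intro add_mono mult_left_mono) (auto simp: X_def)
      show ?thesis
        using triangle endpoints corners super[OF i n(1)] by linarith
    qed
    obtain i where i: "i \<in> {0,1}" "\<bar>f i n\<bar> = X"
      by (cases "\<bar>f 0 n\<bar> \<le> \<bar>f 1 n\<bar>") (auto simp: X_def max_def)
    define s where "s = binom_weight n (q i) 0 + binom_weight n (q i) n"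
    have "s < 1"
      using q[OF i(1)] n by (simp add: s_def binom_weight_endpoints_less_one)
    moreover have "(1 - s) * (X - B n) \<le> 0"
      using step[OF i(1)] i(2) by (simp add: s_def algebra_simps)
    ultimately have "X \<le> B n"
      by (simp add: mult_le_0_iff)
    then show ?thesis by (auto simp: X_def)
  qed
qed

lemma sum_binom_weight_supersolution:
  fixes B :: "nat \<Rightarrow> real" and C D E M q \<beta> :: real
  assumes B: "\<And>k. B k = C * real k - D * real k powr \<beta> + E"
    and q: "0 < q" "q < 1" and \<beta>: "0 < \<beta>" "\<beta> < 1" and n: "n \<ge> 2"
    and D: "0 \<le> D" and E: "0 \<le> E" and gap: "M + E \<le> D * (1 - \<beta>) * (q * (1 - q))"
  shows "M * real n powr \<beta> + (\<Sum>k\<le>n. binom_weight n q k * (B k + B (n - k))) \<le> B n"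
proof -
  define P where "P = (\<Sum>k\<le>n. binom_weight n q k * (real k powr \<beta> + real (n - k) powr \<beta>))"
  have "(\<Sum>k\<le>n. binom_weight n q k * (B k + B (n - k)))
      = (\<Sum>k\<le>n. binom_weight n q k * (C * real n + 2 * E)
          - D * (binom_weight n q k * (real k powr \<beta> + real (n - k) powr \<beta>)))"
    by (intro sum.cong) (auto simp: B of_nat_diff algebra_simps)
  also have "\<dots> = C * real n + 2 * E - D * P"
    by (simp add: P_def sum_subtractf sum_binom_weight flip: sum_distrib_left sum_distrib_right)
  finally have sum_B: "(\<Sum>k\<le>n. binom_weight n q k * (B k + B (n - k))) = C * real n + 2 * E - D * P" .
  have np: "1 \<le> real n powr \<beta>"
    using n \<beta> by (intro ge_one_powr_ge_zero) auto
  have "M * real n powr \<beta> + E \<le> (M + E) * real n powr \<beta>"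
    using mult_left_mono[OF np E] by (simp add: algebra_simps)
  also have "\<dots> \<le> D * (1 - \<beta>) * (q * (1 - q)) * real n powr \<beta>"
    using gap np by (intro mult_right_mono) auto
  finally have "M * real n powr \<beta> + E \<le> D * (1 - \<beta>) * (q * (1 - q)) * real n powr \<beta>" .
  moreover have "D * (real n powr \<beta> * (1 + (1 - \<beta>) * (q * (1 - q)))) \<le> D * P"
    unfolding P_def using sum_binom_weight_powr_ge[OF q \<beta> n] D by (rule mult_left_mono)
  moreover have "D * (real n powr \<beta> * (1 + (1 - \<beta>) * (q * (1 - q))))
      = D * real n powr \<beta> + D * (1 - \<beta>) * (q * (1 - q)) * real n powr \<beta>"
    by (simp add: algebra_simps)
  ultimately show ?thesis
    unfolding sum_B B[of n] by linarith
qed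

lemma linear_bound_of_split_toll_bound:
  fixes q :: "nat \<Rightarrow> real" and f :: "nat \<Rightarrow> nat \<Rightarrow> real" and M \<beta> :: real
  assumes q: "\<And>i. i \<in> {0,1} \<Longrightarrow> 0 < q i \<and> q i < 1" and \<beta>: "0 < \<beta>" "\<beta> < 1"
    and toll: "\<And>i n. i \<in> {0,1} \<Longrightarrow> n \<ge> N\<^sub>0 \<Longrightarrow> \<bar>split_toll q f i n\<bar> \<le> M * real n powr \<beta>"
    and M: "0 \<le> M"
  shows "\<exists>C. \<forall>i\<in>{0,1}. \<forall>n\<ge>1. \<bar>f i n\<bar> \<le> C * real n"
proof -
  define E where "E = max \<bar>f 0 0\<bar> \<bar>f 1 0\<bar>"
  define \<rho> where "\<rho> = min (q 0 * (1 - q 0)) (q 1 * (1 - q 1))"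
  define D where "D = (M + E) / ((1 - \<beta>) * \<rho>)"
  define N where "N = max N\<^sub>0 2"
  define F where "F = (\<Sum>n<N. \<bar>f 0 n\<bar> + \<bar>f 1 n\<bar>)"
  define B where "B n = (F + D) * real n - D * real n powr \<beta> + E" for n
  have \<rho>: "0 < \<rho>" "\<And>i. i \<in> {0,1} \<Longrightarrow> \<rho> \<le> q i * (1 - q i)"
    using q by (auto simp: \<rho>_def)
  have E: "0 \<le> E" and D: "0 \<le> D" and F: "0 \<le> F"
    using \<rho> \<beta> M by (simp_all add: E_def D_def F_def sum_nonneg)
  have gap: "M + E \<le> D * (1 - \<beta>) * (q i * (1 - q i))" if "i \<in> {0,1}" for i
  proof -
    have "M + E = D * (1 - \<beta>) * \<rho>" using \<rho> \<beta> by (simp add: D_def)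
    then show ?thesis using \<rho>(2)[OF that] D \<beta> by (simp add: mult_left_mono)
  qed
  have init: "\<bar>f i n\<bar> \<le> B n" if "i \<in> {0,1}" "n < N" for i n
  proof (cases "n = 0")
    case False
    have "\<bar>f i n\<bar> \<le> \<bar>f 0 n\<bar> + \<bar>f 1 n\<bar>" using that by auto
    also have "\<dots> \<le> F"
      unfolding F_def using that by (intro member_le_sum[where f = "\<lambda>n. \<bar>f 0 n\<bar> + \<bar>f 1 n\<bar>"]) auto
    also have "\<dots> \<le> B n"
    proof -
      have "real n powr \<beta> \<le> real n powr 1" using False \<beta> by (intro powr_mono) auto
      then have "D * real n powr \<beta> \<le> D * real n" using False D by (simp add: mult_left_mono)
      moreover have "F \<le> F * real n" using False F by (simp add: mult_le_cancel_left1)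
      ultimately show ?thesis using E by (simp add: B_def algebra_simps)
    qed
    finally show ?thesis .
  qed (use that in \<open>auto simp: B_def E_def\<close>)
  have bound: "\<forall>i\<in>{0,1}. \<bar>f i n\<bar> \<le> B n" for n
  proof (rule abs_le_supersolution_of_split_toll[OF q _ init])
    fix i n :: nat assume i: "i \<in> {0,1}" and n: "N \<le> n"
    have "M * real n powr \<beta> + (\<Sum>k\<le>n. binom_weight n (q i) k * (B k + B (n - k))) \<le> B n"
      by (rule sum_binom_weight_supersolution[OF B_def])
        (use q[OF i] n \<beta> D E gap[OF i] in \<open>auto simp: N_def\<close>)
    with toll[OF i] n show "\<bar>split_toll q f i n\<bar> + (\<Sum>k\<le>n. binom_weight n (q i) k * (B k + B (n - k))) \<le> B n"
      by (force simp: N_def)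
  qed (auto simp: N_def)
  have "\<bar>f i n\<bar> \<le> (F + D + E) * real n" if "i \<in> {0,1}" "n \<ge> 1" for i n
  proof -
    have "0 \<le> D * real n powr \<beta>" "E \<le> E * real n"
      using D E that by (simp_all add: mult_le_cancel_left1)
    then have "B n \<le> (F + D) * real n + E * real n"
      by (simp add: B_def)
    moreover have "\<bar>f i n\<bar> \<le> B n"
      using bound that(1) by blast
    ultimately show ?thesis
      by (simp add: algebra_simps)
  qed
  then show ?thesis by blast
qed

lemma bigo_linear_of_split_toll_bigo:
  fixes q :: "nat \<Rightarrow> real" and f :: "nat \<Rightarrow> nat \<Rightarrow> real" and \<beta> :: real
  assumes q: "\<And>i. i \<in> {0,1} \<Longrightarrow> 0 < q i \<and> q i < 1" and \<beta>: "\<beta> < 1"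
    and toll: "\<And>i. i \<in> {0,1} \<Longrightarrow> (\<lambda>n. split_toll q f i n) \<in> O(\<lambda>n. real n powr \<beta>)"
    and i: "i \<in> {0,1}"
  shows "(\<lambda>n. f i n) \<in> O(\<lambda>n. real n)"
proof -
  define \<gamma> where "\<gamma> = max \<beta> (1/2)"
  have \<gamma>: "0 < \<gamma>" "\<gamma> < 1" using \<beta> by (auto simp: \<gamma>_def)
  have "(\<lambda>n. real n powr \<beta>) \<in> O(\<lambda>n. real n powr \<gamma>)"
    using powr_bigo_iff[OF filterlim_real_sequentially sequentially_bot, of \<beta> \<gamma>] by (simp add: \<gamma>_def)
  then have toll_\<gamma>: "(\<lambda>n. split_toll q f j n) \<in> O(\<lambda>n. real n powr \<gamma>)" if "j \<in> {0,1}" for j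
    by (rule landau_o.big_trans[OF toll[OF that]])
  have "\<exists>c>0. eventually (\<lambda>n. \<bar>split_toll q f j n\<bar> \<le> c * real n powr \<gamma>) at_top"
    if j: "j \<in> {0,1}" for j
  proof -
    obtain c where "c > 0" "eventually (\<lambda>n. norm (split_toll q f j n) \<le> c * norm (real n powr \<gamma>)) at_top"
      using toll_\<gamma>[OF j] by (rule landau_o.bigE)
    then show ?thesis by (intro exI[of _ c]) (auto elim!: eventually_mono)
  qed
  then obtain c\<^sub>0 c\<^sub>1 where c: "c\<^sub>0 > 0"
      "eventually (\<lambda>n. \<bar>split_toll q f 0 n\<bar> \<le> c\<^sub>0 * real n powr \<gamma>) at_top"
      "eventually (\<lambda>n. \<bar>split_toll q f 1 n\<bar> \<le> c\<^sub>1 * real n powr \<gamma>) at_top"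
    by blast
  then obtain N\<^sub>0 where N\<^sub>0: "\<And>n. n \<ge> N\<^sub>0 \<Longrightarrow>
      \<bar>split_toll q f 0 n\<bar> \<le> c\<^sub>0 * real n powr \<gamma> \<and> \<bar>split_toll q f 1 n\<bar> \<le> c\<^sub>1 * real n powr \<gamma>"
    using eventually_conj[OF c(2,3)] unfolding eventually_sequentially by blast
  have toll_bound: "\<bar>split_toll q f j n\<bar> \<le> max c\<^sub>0 c\<^sub>1 * real n powr \<gamma>"
    if "j \<in> {0,1}" "n \<ge> N\<^sub>0" for j n
  proof -
    have "c\<^sub>0 * real n powr \<gamma> \<le> max c\<^sub>0 c\<^sub>1 * real n powr \<gamma>" "c\<^sub>1 * real n powr \<gamma> \<le> max c\<^sub>0 c\<^sub>1 * real n powr \<gamma>"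
      by (simp_all add: mult_right_mono)
    then show ?thesis using N\<^sub>0[OF that(2)] that(1) by auto
  qed
  obtain C where C: "\<forall>j\<in>{0,1}. \<forall>n\<ge>1. \<bar>f j n\<bar> \<le> C * real n"
    using linear_bound_of_split_toll_bound[OF q \<gamma> toll_bound] c(1) by fastforce
  have "norm (f i n) \<le> C * norm (real n)" if "n \<ge> 1" for n
    using C i that by auto
  then show ?thesis
    unfolding eventually_sequentially by (intro bigoI[where c = C]) (auto simp: eventually_sequentially)
qed

lemma split_toll_correction_bigo:
  fixes q c g :: "nat \<Rightarrow> real" and a eps :: "nat \<Rightarrow> nat \<Rightarrow> real" and K \<alpha> :: real
  assumes q: "0 < q i" "q i < 1"
    and toll_a: "\<And>n. n \<ge> 1 \<Longrightarrow> split_toll q a i n = eps i n"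
    and eps: "(\<lambda>n. eps i n - c i * real n) \<in> O(\<lambda>n. real n powr \<alpha>)"
    and poisson: "c i - K * binary_entropy (q i) = g i - (g 0 * q i + g 1 * (1 - q i))"
  shows "(\<lambda>n. split_toll q (\<lambda>i n. a i n - K * (real n * ln (real n)) - g i * real n) i n)
    \<in> O(\<lambda>n. real n powr max \<alpha> 0)"
proof -
  define r where
    "r n = split_toll q (\<lambda>_ n. real n * ln (real n)) i n - real n * binary_entropy (q i)" for n
  have toll: "split_toll q (\<lambda>i n. a i n - K * (real n * ln (real n)) - g i * real n) i n
      = (eps i n - c i * real n) - K * r n" if "n \<ge> 1" for n
    unfolding split_toll_diff_scaled split_toll_linear toll_a[OF that] r_def
    using arg_cong[OF poisson, of "(*) (real n)"] by (simp add: algebra_simps)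
  have "(\<lambda>n. real n powr \<alpha>) \<in> O(\<lambda>n. real n powr max \<alpha> 0)"
    by (subst powr_bigo_iff[OF filterlim_real_sequentially sequentially_bot]) simp
  with eps have eps': "(\<lambda>n. eps i n - c i * real n) \<in> O(\<lambda>n. real n powr max \<alpha> 0)"
    by (rule landau_o.big_trans)
  have "\<bar>K * r n\<bar> \<le> \<bar>K\<bar> * real n powr max \<alpha> 0" if "n \<ge> 1" for n
  proof -
    have "\<bar>K * r n\<bar> \<le> \<bar>K\<bar> * 1"
      using split_toll_mult_ln[of q i n, OF q that] by (simp add: r_def abs_mult mult_left_le)
    also have "\<dots> \<le> \<bar>K\<bar> * real n powr max \<alpha> 0"
      using that by (intro mult_left_mono ge_one_powr_ge_zero) auto
    finally show ?thesis .
  qed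
  then have "(\<lambda>n. K * r n) \<in> O(\<lambda>n. real n powr max \<alpha> 0)"
    by (intro bigoI[where c = "\<bar>K\<bar>"]) (auto simp: eventually_sequentially)
  with eps' have bigo: "(\<lambda>n. (eps i n - c i * real n) - K * r n) \<in> O(\<lambda>n. real n powr max \<alpha> 0)"
    by (rule sum_in_bigo)
  have ev: "eventually (\<lambda>n. (eps i n - c i * real n) - K * r n
      = split_toll q (\<lambda>i n. a i n - K * (real n * ln (real n)) - g i * real n) i n) at_top"
    unfolding eventually_sequentially by (rule exI[of _ 1]) (simp add: toll)
  show ?thesis
    using landau_o.big.in_cong[OF ev] bigo by blast
qed

lemma split_toll_eq_of_binomial_recurrence:
  assumes "0 \<le> q i" "q i \<le> 1"
    and "a i n = measure_pmf.expectation (binomial_pmf n (q i)) (\<lambda>k. a 0 k)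
      + measure_pmf.expectation (binomial_pmf n (q i)) (\<lambda>k. a 1 (n - k)) + e"
  shows "split_toll q a i n = e"
  using assms by (simp add: split_toll_def expectation_binomial_pmf_eq_sum sum.distrib distrib_left)

lemma row_entropy_eq_binary_entropy:
  "p i 0 + p i 1 = 1 \<Longrightarrow> row_entropy p i = binary_entropy (p i 0)"
  by (simp add: row_entropy_def binary_entropy_def eq_diff_eq[symmetric] add.commute)

lemma chain_entropy_pos:
  assumes p_range: "\<And>i j. i \<in> {0,1} \<Longrightarrow> j \<in> {0,1} \<Longrightarrow> 0 < p i j \<and> p i j < 1"
    and p_stoch: "\<And>i. i \<in> {0,1} \<Longrightarrow> p i 0 + p i 1 = 1"
  shows "0 < chain_entropy p"
proof -
  have "0 < row_entropy p i" if "i \<in> {0,1}" for i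
    using p_range[OF that] binary_entropy_pos row_entropy_eq_binary_entropy[of p i, OF p_stoch[OF that]]
    by simp
  moreover have "0 < stat_pi p 0" "0 < stat_pi p 1"
    using p_range[of 0 1] p_range[of 1 0] by (simp_all add: stat_pi_def)
  ultimately show ?thesis
    unfolding chain_entropy_def by (intro add_pos_pos mult_pos_pos) auto
qed

lemma two_state_poisson_equation_solvable:
  fixes p :: "nat \<Rightarrow> nat \<Rightarrow> real" and d :: "nat \<Rightarrow> real"
  assumes p_stoch: "\<And>i. i \<in> {0,1} \<Longrightarrow> p i 0 + p i 1 = 1"
    and p_pos: "0 < p 0 1" "0 < p 1 0"
    and mean_zero: "stat_pi p 0 * d 0 + stat_pi p 1 * d 1 = 0"
  shows "\<exists>g. \<forall>i\<in>{0,1}. d i = g i - (g 0 * p i 0 + g 1 * p i 1)"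
proof -
  have "stat_pi p 0 * d 0 + stat_pi p 1 * d 1 = (p 1 0 * d 0 + p 0 1 * d 1) / (p 0 1 + p 1 0)"
    by (simp add: stat_pi_def add_divide_distrib)
  with mean_zero p_pos have balance: "p 1 0 * d 0 + p 0 1 * d 1 = 0"
    by simp
  define g where "g i = (if i = 0 then d 0 / p 0 1 else 0)" for i :: nat
  have p00: "p 0 0 = 1 - p 0 1" using p_stoch[of 0] by simp
  have "d 0 = g 0 - (g 0 * p 0 0 + g 1 * p 0 1)"
    unfolding p00 using p_pos by (simp add: g_def field_simps)
  moreover have "d 1 = g 1 - (g 0 * p 1 0 + g 1 * p 1 1)"
    using balance p_pos by (simp add: g_def field_simps)
  ultimately show ?thesis by (intro exI[of _ g]) auto
qed

lemma entropy_poisson_correction_exists: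
  fixes p :: "nat \<Rightarrow> nat \<Rightarrow> real" and c :: "nat \<Rightarrow> real"
  assumes p_range: "\<And>i j. i \<in> {0,1} \<Longrightarrow> j \<in> {0,1} \<Longrightarrow> 0 < p i j \<and> p i j < 1"
    and p_stoch: "\<And>i. i \<in> {0,1} \<Longrightarrow> p i 0 + p i 1 = 1"
  defines "K \<equiv> (stat_pi p 0 * c 0 + stat_pi p 1 * c 1) / chain_entropy p"
  shows "\<exists>g. \<forall>i\<in>{0,1}.
    c i - K * binary_entropy (p i 0) = g i - (g 0 * p i 0 + g 1 * (1 - p i 0))"
proof -
  have "stat_pi p 0 * (c 0 - K * row_entropy p 0) + stat_pi p 1 * (c 1 - K * row_entropy p 1) = 0"
    using chain_entropy_pos[of p, OF p_range p_stoch] by (simp add: K_def chain_entropy_def field_simps)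
  then obtain g where g: "\<forall>i\<in>{0,1}. c i - K * row_entropy p i = g i - (g 0 * p i 0 + g 1 * p i 1)"
    using two_state_poisson_equation_solvable[of p "\<lambda>i. c i - K * row_entropy p i", OF p_stoch]
      p_range[of 0 1] p_range[of 1 0] by auto
  have "p i 1 = 1 - p i 0" "row_entropy p i = binary_entropy (p i 0)" if "i \<in> {0,1}" for i
    using p_stoch[OF that] row_entropy_eq_binary_entropy[of p i] by simp_all
  with g show ?thesis by (intro exI[of _ g]) auto
qed

theorem lemma4p2:
  fixes p :: "nat \<Rightarrow> nat \<Rightarrow> real"
    and a eps :: "nat \<Rightarrow> nat \<Rightarrow> real"
    and c :: "nat \<Rightarrow> real"
    and \<alpha> :: real
  assumes p_range: "\<And>i j. i \<in> {0,1} \<Longrightarrow> j \<in> {0,1} \<Longrightarrow> 0 < p i j \<and> p i j < 1"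
    and p_stoch: "\<And>i. i \<in> {0,1} \<Longrightarrow> p i 0 + p i 1 = 1"
    and p_not_half: "\<exists>i\<in>{0,1}. \<exists>j\<in>{0,1}. p i j \<noteq> 1/2"
    and rec: "\<And>i n. i \<in> {0,1} \<Longrightarrow> n \<ge> 1 \<Longrightarrow>
        a i n = measure_pmf.expectation (binomial_pmf n (p i 0)) (\<lambda>k. a 0 k)
              + measure_pmf.expectation (binomial_pmf n (p i 0)) (\<lambda>k. a 1 (n - k))
              + eps i n"
    and alpha_lt: "\<alpha> < 1"
    and eps_asymp: "\<And>i. i \<in> {0,1} \<Longrightarrow>
        (\<lambda>n. eps i n - c i * real n) \<in> O(\<lambda>n. real n powr \<alpha>)"
  shows "\<forall>i\<in>{0,1}. (\<lambda>n. a i n - (stat_pi p 0 * c 0 + stat_pi p 1 * c 1) / chain_entropy p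
            * real n * ln (real n)) \<in> O(\<lambda>n. real n)"
proof
  fix i :: nat assume i: "i \<in> {0,1}"
  define q where "q j = p j 0" for j
  have q: "0 < q j \<and> q j < 1" if "j \<in> {0,1}" for j
    using p_range[OF that] by (simp add: q_def)
  define K where "K = (stat_pi p 0 * c 0 + stat_pi p 1 * c 1) / chain_entropy p"
  obtain g where poisson: "\<forall>j\<in>{0,1}. c j - K * binary_entropy (q j) = g j - (g 0 * q j + g 1 * (1 - q j))"
    using entropy_poisson_correction_exists[of p c, OF p_range p_stoch] by (auto simp: K_def q_def)
  define f where "f j n = a j n - K * (real n * ln (real n)) - g j * real n" for j n
  have "(\<lambda>n. split_toll q f j n) \<in> O(\<lambda>n. real n powr max \<alpha> 0)" if j: "j \<in> {0,1}" for j
    unfolding f_def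
  proof (rule split_toll_correction_bigo[where eps = eps and c = c])
    show "split_toll q a j n = eps j n" if "n \<ge> 1" for n
      using q[OF j] rec[OF j that] by (intro split_toll_eq_of_binomial_recurrence) (auto simp: q_def)
  qed (use q[OF j] poisson j eps_asymp[OF j] in auto)
  then have "(\<lambda>n. f i n) \<in> O(\<lambda>n. real n)"
    using alpha_lt by (intro bigo_linear_of_split_toll_bigo[of q "max \<alpha> 0" f i, OF q _ _ i]) auto
  then have "(\<lambda>n. f i n + g i * real n) \<in> O(\<lambda>n. real n)"
    by (rule sum_in_bigo) simp
  then show "(\<lambda>n. a i n - (stat_pi p 0 * c 0 + stat_pi p 1 * c 1) / chain_entropy p
      * real n * ln (real n)) \<in> O(\<lambda>n. real n)"
    by (simp add: f_def K_def mult.assoc)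
qed

end
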